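(* Let $\|\cdot\|$ be a norm on $\mathbb{R}^d$ and $\Phi$ a mirror map whose Bregman divergence satisfies $\frac{m}{2}\|x-y\|^2\le D_\Phi(x,y)\le\frac{M}{2}\|x-y\|^2$ for all $x,y\in\mathbb{R}^d$ and some positive constants $m,M$; let $\kappa=M/m$. For every $\alpha>2\sqrt{\kappa-1}$ there exists a choice of $\beta$ such that Primal Online Balanced Descent (with norm $\|\cdot\|$ and mirror map $\Phi$) has competitive ratio at most $3+O(1/\alpha)$ for SOCO with switching cost $\|\cdot\|$ when all cost functions are locally $\alpha$-polyhedral.
   Context: SOCO: a convex decision set $\mathcal{X}\subseteq\mathbb{R}^d$, a norm $\|\cdot\|$ (switching cost), a starting point $x_0$, and non-negative convex cost functions $f_1,\dots,f_T$ ($f_t=+\infty$ outside $\mathcal{X}$). At round $t$ the algorithm observes $f_t$, then chooses $x_t\in\mathcal{X}$, paying $f_t(x_t)+\|x_t-x_{t-1}\|$. $\mathrm{cost}(ALG)=\sum_t f_t(x_t)+\|x_t-x_{t-1}\|$; $\mathrm{cost}(OPT)$ is the minimum of the same expression over all $(x_1,\dots,x_T)\in\mathcal{X}^T$ chosen with full knowledge. An algorithm is $C$-competitive if $\mathrm{cost}(ALG)\le C\,\mathrm{cost}(OPT)$ for all cost sequences. $D_\Phi(x,y)=\Phi(x)-\Phi(y)-\nabla\Phi(y)^T(x-y)$; $\Pi^\Phi_K(x)=\arg\min_{y\in K}D_\Phi(y,x)$. A function $f_t$ with minimizer $v_t$ is locally $\alpha$-polyhedral w.r.t. $\|\cdot\|$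 if there is $\epsilon>0$ with $f_t(x)-f_t(v_t)\ge\alpha\|x-v_t\|$ for all $x\in\mathcal{X}$ with $\|x-v_t\|\le\epsilon$. Primal Online Balanced Descent with parameter $\beta>0$: for $t=1,\dots,T$: observe $f_t$, let $v_t=\arg\min_x f_t(x)$; if $\|x_{t-1}-v_t\|<\beta f_t(v_t)$ set $x_t=v_t$; otherwise, with $K^l_t=\{x:f_t(x)\le l\}$ and $x(l)=\Pi^\Phi_{K^l_t}(x_{t-1})$, increase $l$ until $\|x(l)-x_{t-1}\|=\beta l$ and set $x_t=x(l)$. *)

theory Defs
  imports "HOL-Analysis.Analysis" "HOL-Library.Landau_Symbols"
begin

definition is_norm :: "('a::real_vector \<Rightarrow> real) \<Rightarrow> bool" where
  "is_norm N \<longleftrightarrow> (\<forall>x. N x = 0 \<longleftrightarrow> x = 0) \<and> (\<forall>c x. N (c *\<^sub>R x) = \<bar>c\<bar> * N x)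
     \<and> (\<forall>x y. N (x + y) \<le> N x + N y)"

text \<open>Bregman divergence D_Phi(x,y) = Phi x - Phi y - gradPhi(y)^T (x - y), where the
  gradient term is given by the Frechet derivative Phi' y (a linear map).\<close>
definition bregman :: "('a::real_vector \<Rightarrow> real) \<Rightarrow> ('a \<Rightarrow> 'a \<Rightarrow> real) \<Rightarrow> 'a \<Rightarrow> 'a \<Rightarrow> real" where
  "bregman \<Phi> \<Phi>' x y = \<Phi> x - \<Phi> y - \<Phi>' y (x - y)"

definition is_bregman_proj :: "('a::real_vector \<Rightarrow> real) \<Rightarrow> ('a \<Rightarrow> 'a \<Rightarrow> real) \<Rightarrow> 'a set \<Rightarrow> 'a \<Rightarrow> 'a \<Rightarrow> bool" where
  "is_bregman_proj \<Phi> \<Phi>' K x p \<longleftrightarrow> p \<in> K \<and> (\<forall>y\<in>K. bregman \<Phi> \<Phi>' p x \<le> bregman \<Phi> \<Phi>' y x)"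

text \<open>v minimises f over the decision set X (f is +infinity outside X).\<close>
definition is_minimizer :: "'a set \<Rightarrow> ('a \<Rightarrow> real) \<Rightarrow> 'a \<Rightarrow> bool" where
  "is_minimizer X f v \<longleftrightarrow> v \<in> X \<and> (\<forall>y\<in>X. f v \<le> f y)"

definition locally_polyhedral :: "('a::real_vector \<Rightarrow> real) \<Rightarrow> 'a set \<Rightarrow> real \<Rightarrow> ('a \<Rightarrow> real) \<Rightarrow> bool" where
  "locally_polyhedral N X \<alpha> f \<longleftrightarrow> (\<exists>v. is_minimizer X f v \<and>
     (\<exists>\<epsilon>>0. \<forall>x\<in>X. N (x - v) \<le> \<epsilon> \<longrightarrow> f x - f v \<ge> \<alpha> * N (x - v)))"

definition sublevel :: "'a set \<Rightarrow> ('a \<Rightarrow> real) \<Rightarrow> real \<Rightarrow> 'a set" where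
  "sublevel X f l = {x\<in>X. f x \<le> l}"

text \<open>One step of Primal Online Balanced Descent: from x_{t-1} = xp, having observed f,
  the algorithm may move to xn.\<close>
definition pobd_step ::
  "('a::real_vector \<Rightarrow> real) \<Rightarrow> ('a \<Rightarrow> real) \<Rightarrow> ('a \<Rightarrow> 'a \<Rightarrow> real) \<Rightarrow> real \<Rightarrow> 'a set
     \<Rightarrow> ('a \<Rightarrow> real) \<Rightarrow> 'a \<Rightarrow> 'a \<Rightarrow> bool" where
  "pobd_step N \<Phi> \<Phi>' \<beta> X f xp xn \<longleftrightarrow> (\<exists>v. is_minimizer X f v \<and>
     (if N (xp - v) < \<beta> * f v then xn = v
      else (\<exists>l. is_bregman_proj \<Phi> \<Phi>' (sublevel X f l) xp xn \<and> N (xn - xp) = \<beta> * l \<and>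
              (\<forall>l' < l. \<forall>p. is_bregman_proj \<Phi> \<Phi>' (sublevel X f l') xp p \<longrightarrow>
                   N (p - xp) \<noteq> \<beta> * l'))))"

definition soco_cost :: "('a::real_vector \<Rightarrow> real) \<Rightarrow> (nat \<Rightarrow> 'a \<Rightarrow> real) \<Rightarrow> nat \<Rightarrow> (nat \<Rightarrow> 'a) \<Rightarrow> real" where
  "soco_cost N f T x = (\<Sum>t=1..T. f t (x t) + N (x t - x (t - 1)))"

definition soco_opt :: "('a::real_vector \<Rightarrow> real) \<Rightarrow> 'a set \<Rightarrow> 'a \<Rightarrow> (nat \<Rightarrow> 'a \<Rightarrow> real) \<Rightarrow> nat \<Rightarrow> real" where
  "soco_opt N X x0 f T = Inf {soco_cost N f T y | y. y 0 = x0 \<and> (\<forall>t\<in>{1..T}. y t \<in> X)}"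

definition pobd_competitive ::
  "('a::real_vector \<Rightarrow> real) \<Rightarrow> ('a \<Rightarrow> real) \<Rightarrow> ('a \<Rightarrow> 'a \<Rightarrow> real) \<Rightarrow> real \<Rightarrow> real \<Rightarrow> real \<Rightarrow> bool" where
  "pobd_competitive N \<Phi> \<Phi>' \<alpha> \<beta> C \<longleftrightarrow>
     (\<forall>X x0 T f x. convex X \<longrightarrow>
        (\<forall>t\<in>{1..T}. convex_on X (f t) \<and> (\<forall>y\<in>X. 0 \<le> f t y) \<and> locally_polyhedral N X \<alpha> (f t)) \<longrightarrow>
        x 0 = x0 \<longrightarrow>
        (\<forall>t\<in>{1..T}. pobd_step N \<Phi> \<Phi>' \<beta> X (f t) (x (t - 1)) (x t)) \<longrightarrow>
        soco_cost N f T x \<le> C * soco_opt N X x0 f T)"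

end

theory Submission
  imports Defs "HOL-Real_Asymp.Real_Asymp"
begin

text \<open>By convexity, local
  \<open>\<alpha>\<close>-polyhedrality is global: \<open>N (z - v) \<le> (f z - f v) / \<alpha>\<close> on all of \<open>X\<close>. Take
  \<open>\<beta> = 1/2 + 4/\<alpha>\<close> and compare a POBD run \<open>x\<close> with any feasible trajectory \<open>y\<close> through
  the potential \<open>c N (x\<^sub>t - y\<^sub>t)\<close>, \<open>c = 3 + 8/\<alpha>\<close>. If POBD jumps to the minimiser, its
  cost is controlled by \<open>f (v) \<le> f (y\<^sub>t)\<close>. Otherwise it moves a distance \<open>\<beta> l\<close> to a point
  of the sublevel set at level \<open>l\<close>: if \<open>f (y\<^sub>t) > l\<close> the step cost is paid by \<open>f (y\<^sub>t)\<close>;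
  if \<open>f (y\<^sub>t) \<le> l\<close> then \<open>x\<^sub>t\<close> and \<open>y\<^sub>t\<close> are both within \<open>l/\<alpha>\<close> of the minimiser, so the
  potential drops by enough to pay for the step. Telescoping gives the ratio
  \<open>3 + 20/\<alpha> + 32/\<alpha>\<^sup>2\<close>.\<close>

lemma is_norm_zero: "is_norm N \<Longrightarrow> N 0 = 0"
  by (simp add: is_norm_def)

lemma is_norm_eq_0_iff: "is_norm N \<Longrightarrow> N x = 0 \<longleftrightarrow> x = 0"
  by (simp add: is_norm_def)

lemma is_norm_scaleR: "is_norm N \<Longrightarrow> N (c *\<^sub>R x) = \<bar>c\<bar> * N x"
  by (simp add: is_norm_def)

lemma is_norm_minus_commute: "is_norm N \<Longrightarrow> N (x - y) = N (y - x)"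
  using is_norm_scaleR[of N "-1" "x - y"] by simp

lemma is_norm_triangle_diff: "is_norm N \<Longrightarrow> N (x - z) \<le> N (x - y) + N (y - z)"
  unfolding is_norm_def by (metis diff_add_cancel add_diff_eq)

lemma is_norm_nonneg: "is_norm N \<Longrightarrow> 0 \<le> N x"
proof -
  assume N: "is_norm N"
  have "N (x + - x) \<le> N x + N (- x)"
    using N unfolding is_norm_def by blast
  moreover have "N (- x) = N x"
    using is_norm_minus_commute[OF N, of 0 x] by simp
  ultimately show ?thesis
    using is_norm_zero[OF N] by simp
qed

lemma norm_sq_sandwich_imp_le:
  fixes N :: "'a::real_vector \<Rightarrow> real" and x :: 'a and D :: "'a \<Rightarrow> 'a \<Rightarrow> real"
  assumes "is_norm N" and "x \<noteq> 0"
    and "\<And>x y. m / 2 * (N (x - y))\<^sup>2 \<le> D x y" and "\<And>x y. D x y \<le> M / 2 * (N (x - y))\<^sup>2"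
  shows "m \<le> M"
proof -
  have "N x \<noteq> 0"
    using assms(1,2) is_norm_eq_0_iff by blast
  moreover have "m / 2 * (N (x - 0))\<^sup>2 \<le> M / 2 * (N (x - 0))\<^sup>2"
    using assms(3,4) order_trans by blast
  ultimately show ?thesis by simp
qed

definition sharp_minimizer :: "('a::real_vector \<Rightarrow> real) \<Rightarrow> 'a set \<Rightarrow> real \<Rightarrow> ('a \<Rightarrow> real) \<Rightarrow> 'a \<Rightarrow> bool" where
  "sharp_minimizer N X a f v \<longleftrightarrow> is_minimizer X f v \<and> (\<forall>z\<in>X. N (z - v) \<le> a * (f z - f v))"

lemma sharp_minimizer_unique:
  assumes "is_norm N" and "sharp_minimizer N X a f v" and "is_minimizer X f w"
  shows "w = v"
proof -
  have "f w = f v" and "w \<in> X"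
    using assms(2,3) by (force simp: sharp_minimizer_def is_minimizer_def)+
  then have "N (w - v) \<le> 0"
    using assms(2) by (auto simp: sharp_minimizer_def)
  then show ?thesis
    using assms(1) is_norm_nonneg is_norm_eq_0_iff by (metis antisym right_minus_eq)
qed

lemma convex_local_growth_imp_global:
  assumes N: "is_norm N" and "convex X" and f: "convex_on X f" and vX: "v \<in> X" and zX: "z \<in> X"
    and "\<epsilon> > 0" and loc: "\<forall>x\<in>X. N (x - v) \<le> \<epsilon> \<longrightarrow> \<alpha> * N (x - v) \<le> f x - f v"
  shows "\<alpha> * N (z - v) \<le> f z - f v"
proof (cases "N (z - v) \<le> \<epsilon>")
  case True
  then show ?thesis using loc zX by blast
next
  case False
  define t where "t = \<epsilon> / N (z - v)"
  have t: "0 < t" "t < 1"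
    using False \<open>\<epsilon> > 0\<close> by (auto simp: t_def)
  define w where "w = (1 - t) *\<^sub>R v + t *\<^sub>R z"
  have wX: "w \<in> X"
    using \<open>convex X\<close> vX zX t unfolding w_def by (simp add: convexD)
  have "w - v = t *\<^sub>R (z - v)"
    unfolding w_def by (simp add: algebra_simps)
  then have "N (w - v) = \<epsilon>"
    using is_norm_scaleR[OF N] t False \<open>\<epsilon> > 0\<close> by (simp add: t_def)
  moreover have "t * N (z - v) = \<epsilon>"
    using False \<open>\<epsilon> > 0\<close> by (simp add: t_def)
  ultimately have "t * (\<alpha> * N (z - v)) \<le> f w - f v"
    using loc wX by (metis mult.left_commute order_refl)
  also have "f w - f v \<le> t * (f z - f v)"
    using convex_onD[OF f, of t v z] t vX zX unfolding w_def by (simp add: algebra_simps)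
  finally show ?thesis
    using t by simp
qed

lemma locally_polyhedral_imp_sharp_minimizer:
  assumes "is_norm N" and "convex X" and "convex_on X f" and "\<alpha> > 0"
    and "locally_polyhedral N X \<alpha> f"
  shows "\<exists>v. sharp_minimizer N X (1 / \<alpha>) f v"
proof -
  obtain v \<epsilon> where v: "is_minimizer X f v" and "\<epsilon> > 0"
    and loc: "\<forall>x\<in>X. N (x - v) \<le> \<epsilon> \<longrightarrow> \<alpha> * N (x - v) \<le> f x - f v"
    using assms(5) unfolding locally_polyhedral_def by blast
  have "N (z - v) \<le> 1 / \<alpha> * (f z - f v)" if "z \<in> X" for z
    using convex_local_growth_imp_global[OF assms(1-3) _ that \<open>\<epsilon> > 0\<close> loc] v \<open>\<alpha> > 0\<close>
    by (simp add: is_minimizer_def field_simps)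
  with v show ?thesis
    unfolding sharp_minimizer_def by blast
qed

lemma pobd_step_mem: "pobd_step N \<Phi> \<Phi>' \<beta> X f p x \<Longrightarrow> x \<in> X"
  by (auto simp: pobd_step_def is_minimizer_def is_bregman_proj_def sublevel_def split: if_splits)

lemma pobd_step_cases:
  assumes "is_norm N" and "sharp_minimizer N X a f v" and "pobd_step N \<Phi> \<Phi>' \<beta> X f p x"
  obtains "x = v" and "N (p - v) < \<beta> * f v"
    | l where "x \<in> X" and "f x \<le> l" and "N (x - p) = \<beta> * l"
proof -
  obtain w where w: "is_minimizer X f w" and step:
    "if N (p - w) < \<beta> * f w then x = w
     else \<exists>l. is_bregman_proj \<Phi> \<Phi>' (sublevel X f l) p x \<and> N (x - p) = \<beta> * l \<and>
              (\<forall>l' < l. \<forall>q. is_bregman_proj \<Phi> \<Phi>' (sublevel X f l') p q \<longrightarrow> N (q - p) \<noteq> \<beta> * l')"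
    using assms(3) unfolding pobd_step_def by blast
  have "w = v"
    using sharp_minimizer_unique[OF assms(1,2) w] .
  with step that show ?thesis
    by (auto simp: is_bregman_proj_def sublevel_def split: if_splits)
qed

lemma amortized_jump:
  assumes N: "is_norm N" and v: "sharp_minimizer N X a f v" and "0 \<le> f v" and "y \<in> X"
    and jump: "N (p - v) < \<beta> * f v" and "0 \<le> a" and "0 \<le> \<beta>" and "0 \<le> c" and "1 + \<beta> + c * a \<le> C"
  shows "f v + N (v - p) + c * N (v - y) \<le> c * N (p - y) + C * f y"
proof -
  have fy: "f v \<le> f y" and "N (y - v) \<le> a * (f y - f v)"
    using v \<open>y \<in> X\<close> by (auto simp: sharp_minimizer_def is_minimizer_def)
  then have "c * N (v - y) \<le> c * (a * (f y - f v))"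
    using \<open>0 \<le> c\<close> is_norm_minus_commute[OF N, of v y] by (simp add: mult_left_mono)
  moreover have "N (v - p) \<le> \<beta> * f v"
    using jump is_norm_minus_commute[OF N, of v p] by simp
  ultimately have "f v + N (v - p) + c * N (v - y) \<le> (1 + \<beta>) * f v + c * a * (f y - f v)"
    by (simp add: algebra_simps)
  also have "\<dots> \<le> (1 + \<beta>) * f y + c * a * f y"
  proof -
    have "(1 + \<beta>) * f v \<le> (1 + \<beta>) * f y" and "0 \<le> c * a * f v"
      using fy \<open>0 \<le> \<beta>\<close> \<open>0 \<le> f v\<close> \<open>0 \<le> a\<close> \<open>0 \<le> c\<close> by (simp_all add: mult_left_mono)
    then show ?thesis
      unfolding right_diff_distrib by linarith
  qed
  also have "\<dots> \<le> C * f y"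
    using fy \<open>0 \<le> f v\<close> \<open>1 + \<beta> + c * a \<le> C\<close> by (metis distrib_right mult_right_mono order_trans)
  also have "\<dots> \<le> c * N (p - y) + C * f y"
    using \<open>0 \<le> c\<close> is_norm_nonneg[OF N] by simp
  finally show ?thesis .
qed

lemma amortized_move:
  assumes N: "is_norm N" and v: "sharp_minimizer N X a f v" and nonneg: "\<forall>z\<in>X. 0 \<le> f z"
    and "x \<in> X" and "y \<in> X" and fx: "f x \<le> l" and dist: "N (x - p) = \<beta> * l"
    and "0 \<le> a" and "0 \<le> \<beta>" and "0 \<le> c"
    and drop: "1 + \<beta> + 4 * a * c \<le> c * \<beta>" and C: "1 + \<beta> + c * \<beta> \<le> C"
  shows "f x + N (x - p) + c * N (x - y) \<le> c * N (p - y) + C * f y"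
proof (cases "l < f y")
  case True
  have "0 \<le> l"
    using nonneg \<open>x \<in> X\<close> fx by force
  have "c * N (x - y) \<le> c * (N (x - p) + N (p - y))"
    using is_norm_triangle_diff[OF N] \<open>0 \<le> c\<close> by (simp add: mult_left_mono)
  then have "f x + N (x - p) + c * N (x - y) \<le> c * N (p - y) + (1 + \<beta> + c * \<beta>) * l"
    using fx dist by (simp add: algebra_simps)
  also have "(1 + \<beta> + c * \<beta>) * l \<le> (1 + \<beta> + c * \<beta>) * f y"
    using True \<open>0 \<le> \<beta>\<close> \<open>0 \<le> c\<close> by (simp add: mult_left_mono)
  also have "\<dots> \<le> C * f y"
    using C True \<open>0 \<le> l\<close> by (simp add: mult_right_mono)
  finally show ?thesis by simp
next
  case False
  have "0 \<le> f v" and "N (x - v) \<le> a * (f x - f v)" and "N (y - v) \<le> a * (f y - f v)"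
    using v nonneg \<open>x \<in> X\<close> \<open>y \<in> X\<close> by (auto simp: sharp_minimizer_def is_minimizer_def)
  moreover have "a * (f x - f v) + a * (f y - f v) \<le> a * (2 * l)"
  proof -
    have "f x - f v + (f y - f v) \<le> 2 * l"
      using \<open>0 \<le> f v\<close> fx False by linarith
    then show ?thesis
      using \<open>0 \<le> a\<close> by (simp flip: distrib_left add: mult_left_mono)
  qed
  ultimately have "N (x - y) \<le> 2 * a * l"
    using is_norm_triangle_diff[OF N, of x y v] is_norm_minus_commute[OF N, of v y] by simp
  then have "2 * c * N (x - y) \<le> 2 * c * (2 * a * l)"
    using \<open>0 \<le> c\<close> by (intro mult_left_mono) auto
  then have close: "2 * c * N (x - y) \<le> 4 * a * c * l"
    by (simp add: algebra_simps)
  have "c * N (x - p) \<le> c * N (x - y) + c * N (p - y)"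
    using is_norm_triangle_diff[OF N, of x p y] is_norm_minus_commute[OF N, of y p] \<open>0 \<le> c\<close>
    by (simp flip: distrib_left add: mult_left_mono)
  moreover have "c * N (x - p) = c * \<beta> * l"
    using dist by simp
  moreover have "(1 + \<beta> + 4 * a * c - c * \<beta>) * l \<le> 0"
    using drop False nonneg \<open>y \<in> X\<close> by (intro mult_nonpos_nonneg) auto
  moreover have "0 \<le> C * f y"
    using C \<open>0 \<le> \<beta>\<close> mult_nonneg_nonneg[OF \<open>0 \<le> c\<close> \<open>0 \<le> \<beta>\<close>] nonneg \<open>y \<in> X\<close> by simp
  ultimately show ?thesis
    using close fx dist by (simp add: algebra_simps)
qed

lemma pobd_step_amortized:
  assumes N: "is_norm N" and v: "sharp_minimizer N X a f v" and nonneg: "\<forall>z\<in>X. 0 \<le> f z"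
    and "y \<in> X" and step: "pobd_step N \<Phi> \<Phi>' \<beta> X f p x"
    and "0 \<le> a" and "0 \<le> \<beta>" and "0 \<le> c"
    and drop: "1 + \<beta> + 4 * a * c \<le> c * \<beta>" and C: "1 + \<beta> + c * \<beta> \<le> C"
  shows "f x + N (x - p) + c * N (x - y) \<le> c * N (p - y) + C * f y"
  using N v step
proof (cases rule: pobd_step_cases)
  case 1
  have "0 \<le> f v"
    using v nonneg by (simp add: sharp_minimizer_def is_minimizer_def)
  moreover have "1 + \<beta> + c * a \<le> C"
    using drop C \<open>0 \<le> \<beta>\<close> mult_nonneg_nonneg[OF \<open>0 \<le> a\<close> \<open>0 \<le> c\<close>] by (simp add: algebra_simps)
  ultimately show ?thesis
    using amortized_jump[OF N v _ \<open>y \<in> X\<close> _ \<open>0 \<le> a\<close> \<open>0 \<le> \<beta>\<close> \<open>0 \<le> c\<close>] 1 by simp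
next
  case (2 l)
  then show ?thesis
    using amortized_move[OF N v nonneg _ \<open>y \<in> X\<close> _ _ \<open>0 \<le> a\<close> \<open>0 \<le> \<beta>\<close> \<open>0 \<le> c\<close> drop C] by simp
qed

lemma soco_cost_Suc:
  "soco_cost N f (Suc T) x = soco_cost N f T x + f (Suc T) (x (Suc T)) + N (x (Suc T) - x T)"
  by (simp add: soco_cost_def)

text \<open>Amortised analysis with potential \<open>c N (x t - y t)\<close>: the per-round inequality
  telescopes because the comparison trajectory \<open>y\<close> pays \<open>C \<ge> c\<close> for every unit the potential
  can grow by its own movement.\<close>

lemma soco_cost_potential_bound:
  assumes N: "is_norm N" and "0 \<le> c" and "c \<le> C" and "x 0 = y 0"
    and step: "\<And>t. t \<in> {1..T} \<Longrightarrow> f t (x t) + N (x t - x (t - 1)) + c * N (x t - y t)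
                  \<le> c * N (x (t - 1) - y t) + C * f t (y t)"
  shows "soco_cost N f T x + c * N (x T - y T) \<le> C * soco_cost N f T y"
  using step
proof (induction T)
  case 0
  then show ?case
    using \<open>x 0 = y 0\<close> is_norm_zero[OF N] by (simp add: soco_cost_def)
next
  case (Suc T)
  have IH: "soco_cost N f T x + c * N (x T - y T) \<le> C * soco_cost N f T y"
    using Suc by simp
  have "f (Suc T) (x (Suc T)) + N (x (Suc T) - x T) + c * N (x (Suc T) - y (Suc T))
          \<le> c * N (x T - y (Suc T)) + C * f (Suc T) (y (Suc T))"
    using Suc.prems[of "Suc T"] by simp
  moreover have "c * N (x T - y (Suc T)) \<le> c * N (x T - y T) + c * N (y (Suc T) - y T)"
    using is_norm_triangle_diff[OF N, of "x T" "y (Suc T)" "y T"] is_norm_minus_commute[OF N, of "y T"]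
      \<open>0 \<le> c\<close> by (simp flip: distrib_left add: mult_left_mono)
  moreover have "c * N (y (Suc T) - y T) \<le> C * N (y (Suc T) - y T)"
    using \<open>c \<le> C\<close> is_norm_nonneg[OF N] by (simp add: mult_right_mono)
  ultimately show ?case
    using IH by (simp add: soco_cost_Suc distrib_left)
qed

lemma soco_cost_le_opt:
  assumes "C > 0" and "x 0 = x0" and "\<forall>t\<in>{1..T}. x t \<in> X"
    and bound: "\<And>y. y 0 = x0 \<Longrightarrow> \<forall>t\<in>{1..T}. y t \<in> X \<Longrightarrow> soco_cost N f T x \<le> C * soco_cost N f T y"
  shows "soco_cost N f T x \<le> C * soco_opt N X x0 f T"
proof -
  let ?S = "{soco_cost N f T y |y. y 0 = x0 \<and> (\<forall>t\<in>{1..T}. y t \<in> X)}"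
  have "soco_cost N f T x / C \<le> s" if s: "s \<in> ?S" for s
  proof -
    obtain y where "s = soco_cost N f T y" and "y 0 = x0" and "\<forall>t\<in>{1..T}. y t \<in> X"
      using s by blast
    then show ?thesis
      using bound[of y] \<open>C > 0\<close> by (simp add: pos_divide_le_eq mult.commute)
  qed
  moreover have "?S \<noteq> {}"
    using assms(2,3) by blast
  ultimately have "soco_cost N f T x / C \<le> Inf ?S"
    by (intro cInf_greatest)
  then show ?thesis
    using \<open>C > 0\<close> unfolding soco_opt_def by (simp add: pos_divide_le_eq mult.commute)
qed

lemma pobd_cost_le_comparator:
  assumes N: "is_norm N"
    and sharp: "\<forall>t\<in>{1..T}. \<exists>v. sharp_minimizer N X a (f t) v"
    and nonneg: "\<forall>t\<in>{1..T}. \<forall>z\<in>X. 0 \<le> f t z"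
    and steps: "\<forall>t\<in>{1..T}. pobd_step N \<Phi> \<Phi>' \<beta> X (f t) (x (t - 1)) (x t)"
    and "x 0 = y 0" and yX: "\<forall>t\<in>{1..T}. y t \<in> X"
    and "0 \<le> a" and "0 \<le> \<beta>" and "0 \<le> c" and "c \<le> C"
    and drop: "1 + \<beta> + 4 * a * c \<le> c * \<beta>" and C: "1 + \<beta> + c * \<beta> \<le> C"
  shows "soco_cost N f T x \<le> C * soco_cost N f T y"
proof -
  have round: "f t (x t) + N (x t - x (t - 1)) + c * N (x t - y t)
                 \<le> c * N (x (t - 1) - y t) + C * f t (y t)" if t: "t \<in> {1..T}" for t
  proof -
    obtain v where v: "sharp_minimizer N X a (f t) v"
      using sharp t by blast
    have "\<forall>z\<in>X. 0 \<le> f t z" and "y t \<in> X" and "pobd_step N \<Phi> \<Phi>' \<beta> X (f t) (x (t - 1)) (x t)"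
      using nonneg yX steps t by simp_all
    then show ?thesis
      using pobd_step_amortized[OF N v _ _ _ \<open>0 \<le> a\<close> \<open>0 \<le> \<beta>\<close> \<open>0 \<le> c\<close> drop C] by blast
  qed
  have "soco_cost N f T x + c * N (x T - y T) \<le> C * soco_cost N f T y"
    using soco_cost_potential_bound[where f = f and x = x and y = y,
        OF N \<open>0 \<le> c\<close> \<open>c \<le> C\<close> \<open>x 0 = y 0\<close>] round
    by blast
  moreover have "0 \<le> c * N (x T - y T)"
    using \<open>0 \<le> c\<close> is_norm_nonneg[OF N] by simp
  ultimately show ?thesis by linarith
qed

lemma pobd_competitive_locally_polyhedral:
  assumes N: "is_norm N" and "\<alpha> > 0"
  shows "pobd_competitive N \<Phi> \<Phi>' \<alpha> (1/2 + 4/\<alpha>) (3 + 20/\<alpha> + 32/\<alpha>\<^sup>2)"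
  unfolding pobd_competitive_def
proof (intro allI impI)
  fix X x0 T f and x :: "nat \<Rightarrow> 'a"
  assume "convex X"
    and hyps: "\<forall>t\<in>{1..T}. convex_on X (f t) \<and> (\<forall>y\<in>X. 0 \<le> f t y) \<and> locally_polyhedral N X \<alpha> (f t)"
    and "x 0 = x0" and steps: "\<forall>t\<in>{1..T}. pobd_step N \<Phi> \<Phi>' (1/2 + 4/\<alpha>) X (f t) (x (t - 1)) (x t)"
  define a where "a = 1 / \<alpha>"
  define c where "c = 3 + 8 * a"
  define C where "C = 3 + 20 * a + 32 * a\<^sup>2"
  have "a > 0"
    using \<open>\<alpha> > 0\<close> by (simp add: a_def)
  then have params: "0 \<le> 1/2 + 4 * a" "0 \<le> c" "c \<le> C"
      "1 + (1/2 + 4 * a) + 4 * a * c \<le> c * (1/2 + 4 * a)"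
      "1 + (1/2 + 4 * a) + c * (1/2 + 4 * a) \<le> C"
    by (simp_all add: c_def C_def algebra_simps power2_eq_square)
  have "\<forall>t\<in>{1..T}. \<exists>v. sharp_minimizer N X a (f t) v"
    using locally_polyhedral_imp_sharp_minimizer[OF N \<open>convex X\<close> _ \<open>\<alpha> > 0\<close>] hyps
    by (simp add: a_def)
  moreover have "\<forall>t\<in>{1..T}. \<forall>z\<in>X. 0 \<le> f t z"
    using hyps by blast
  moreover have "\<forall>t\<in>{1..T}. pobd_step N \<Phi> \<Phi>' (1/2 + 4 * a) X (f t) (x (t - 1)) (x t)"
    using steps by (simp add: a_def)
  ultimately have bound: "soco_cost N f T x \<le> C * soco_cost N f T y"
    if "y 0 = x0" and "\<forall>t\<in>{1..T}. y t \<in> X" for y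
    using pobd_cost_le_comparator[OF N, where y = y] that \<open>x 0 = x0\<close> \<open>a > 0\<close> params
    by simp
  have "\<forall>t\<in>{1..T}. x t \<in> X"
    using steps pobd_step_mem by blast
  moreover have "C > 0"
    using \<open>a > 0\<close> by (simp add: C_def add_pos_nonneg)
  moreover have "3 + 20/\<alpha> + 32/\<alpha>\<^sup>2 = C"
    by (simp add: C_def a_def power_divide)
  ultimately show "soco_cost N f T x \<le> (3 + 20/\<alpha> + 32/\<alpha>\<^sup>2) * soco_opt N X x0 f T"
    using soco_cost_le_opt[OF _ \<open>x 0 = x0\<close> _ bound] by simp
qed

theorem theorem9:
  fixes N :: "real ^ 'd \<Rightarrow> real"
    and \<Phi> :: "real ^ 'd \<Rightarrow> real"
    and \<Phi>' :: "real ^ 'd \<Rightarrow> real ^ 'd \<Rightarrow> real"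
    and m M :: real
  assumes "is_norm N"
    and "\<And>x. (\<Phi> has_derivative \<Phi>' x) (at x)"
    and "m > 0" and "M > 0"
    and "\<And>x y. m / 2 * (N (x - y))\<^sup>2 \<le> bregman \<Phi> \<Phi>' x y"
    and "\<And>x y. bregman \<Phi> \<Phi>' x y \<le> M / 2 * (N (x - y))\<^sup>2"
  shows "\<exists>g :: real \<Rightarrow> real.
           (\<lambda>\<alpha>. g \<alpha> - 3) \<in> O[at_top](\<lambda>\<alpha>. 1 / \<alpha>) \<and>
           (\<forall>\<alpha> > 2 * sqrt (M / m - 1). \<exists>\<beta> > 0. pobd_competitive N \<Phi> \<Phi>' \<alpha> \<beta> (g \<alpha>))"
proof -
  have "axis undefined 1 \<noteq> (0 :: real ^ 'd)"
    by (simp add: axis_eq_0_iff)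
  then have "m \<le> M"
    using norm_sq_sandwich_imp_le[OF assms(1) _ assms(5,6)] by blast
  then have "0 \<le> sqrt (M / m - 1)"
    using \<open>m > 0\<close> by simp
  have "\<exists>\<beta> > 0. pobd_competitive N \<Phi> \<Phi>' \<alpha> \<beta> (3 + 20/\<alpha> + 32/\<alpha>\<^sup>2)"
    if "\<alpha> > 2 * sqrt (M / m - 1)" for \<alpha>
  proof -
    have "\<alpha> > 0"
      using that \<open>0 \<le> sqrt (M / m - 1)\<close> by linarith
    then have "1/2 + 4/\<alpha> > 0"
      by (simp add: add_pos_pos)
    with pobd_competitive_locally_polyhedral[OF assms(1) \<open>\<alpha> > 0\<close>] show ?thesis
      by blast
  qed
  moreover have "(\<lambda>\<alpha>::real. 3 + 20/\<alpha> + 32/\<alpha>\<^sup>2 - 3) \<in> O[at_top](\<lambda>\<alpha>. 1 / \<alpha>)"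
    by real_asymp
  ultimately show ?thesis
    by (intro exI[of _ "\<lambda>\<alpha>. 3 + 20/\<alpha> + 32/\<alpha>\<^sup>2"]) simp
qed

end
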